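(* Let $\rho=|\psi\rangle\langle\psi|$ be an $n$-qubit pure state, $S\subseteq[n]$ non-empty with $s=|S|$, $\epsilon>0$ and $1-\delta\in(0,1)$. Let $N_B=\lceil 8\log(1/\delta)\rceil$, $B=\lceil 4\cdot 3^s/\epsilon^2\rceil$, and perform $M=2N_BB$ independent local SIC-POVM measurements on the qubits of $S$ of copies of $\rho$, with outcomes $\mathbf{Q}_1,\dots,\mathbf{Q}_M\in\{1,2,3,4\}^s$ i.i.d. with distribution $P(\mathbf{q})=\operatorname{tr}\big(\rho\bigotimes_{i\in S}|\tilde\phi_{q_i}\rangle\langle\tilde\phi_{q_i}|\big)$. For each $1\le b\le N_B$ define $$\overline{\mathcal{C}}^{(b)}_{|\psi\rangle}(S)=1-3^s\frac1B\sum_{i=(b-1)B+1}^{bB}\mathbb{1}[\mathbf{Q}_{2i-1}=\mathbf{Q}_{2i}].$$ Then $$\Pr\Big[\big|\operatorname{median}\big(\overline{\mathcal{C}}^{(1)}_{|\psi\rangle}(S),\dots,\overline{\mathcal{C}}^{(N_B)}_{|\psi\rangle}(S)\big)-\mathcal{C}_{|\psi\rangle}(S)\big|\ge\epsilon\Big]\le\delta,$$ giving an upper bound $O\big(3^s\log(1/\delta)\epsilon^{-2}\big)$ on the number of SIC measurements needed to estimate $\mathcal{C}_{|\psi\rangle}(S)$.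
   Context: $[n]=\{1,\dots,n\}$ labels the qubits. For an $n$-qubit pure state $|\psi\rangle$ and a non-empty $S\subseteq[n]$ with $s=|S|$, the concentratable entanglement is $\mathcal{C}_{|\psi\rangle}(S)=1-\frac{1}{2^s}\sum_{\alpha\subseteq S}\operatorname{tr}(\rho_\alpha^2)$, where $\rho_\alpha$ is the reduced state of $|\psi\rangle\langle\psi|$ on the qubits in $\alpha$, and $\operatorname{tr}(\rho_\emptyset^2):=1$. A single-qubit SIC-POVM consists of $|\tilde\phi_j\rangle=\frac{1}{\sqrt2}|\phi_j\rangle$, $j=1,\dots,4$, where $|\phi_j\rangle$ are unit vectors in $\mathbb{C}^2$ with $|\langle\phi_j|\phi_k\rangle|^2=1/3$ for $j\neq k$, so that $\sum_j|\tilde\phi_j\rangle\langle\tilde\phi_j|=\mathbb{I}$. $\mathbb{1}[A]$ is $1$ if $A$ holds and $0$ otherwise. *)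

theory Defs
  imports "HOL-Probability.Probability"
begin

text \<open>Computational basis of n qubits: a basis vector is identified with the set
T of qubits (a subset of {1..n}) that are in state |1>. A state vector is a
function from such sets to amplitudes.\<close>

type_synonym qstate = "nat set \<Rightarrow> complex"

definition pure_state :: "nat \<Rightarrow> qstate \<Rightarrow> bool" where
  "pure_state n \<psi> \<longleftrightarrow> (\<forall>T. \<not> T \<subseteq> {1..n} \<longrightarrow> \<psi> T = 0)
      \<and> (\<Sum>T\<in>Pow {1..n}. (cmod (\<psi> T))^2) = 1"

text \<open>Matrix entry <x| rho_alpha |y> of the reduced state on the qubits alpha
(x, y subsets of alpha), obtained by tracing out {1..n} - alpha.\<close>
definition reduced_state :: "nat \<Rightarrow> qstate \<Rightarrow> nat set \<Rightarrow> nat set \<Rightarrow> nat set \<Rightarrow> complex" where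
  "reduced_state n \<psi> \<alpha> x y = (\<Sum>z\<in>Pow ({1..n} - \<alpha>). \<psi> (x \<union> z) * cnj (\<psi> (y \<union> z)))"

text \<open>tr(rho_alpha^2), with the convention tr(rho_empty^2) = 1.\<close>
definition purity :: "nat \<Rightarrow> qstate \<Rightarrow> nat set \<Rightarrow> real" where
  "purity n \<psi> \<alpha> = (if \<alpha> = {} then 1 else
     Re (\<Sum>x\<in>Pow \<alpha>. \<Sum>y\<in>Pow \<alpha>. reduced_state n \<psi> \<alpha> x y * reduced_state n \<psi> \<alpha> y x))"

definition concentratable_entanglement :: "nat \<Rightarrow> qstate \<Rightarrow> nat set \<Rightarrow> real" where
  "concentratable_entanglement n \<psi> S =
     1 - (1 / 2 ^ card S) * (\<Sum>\<alpha>\<in>Pow S. purity n \<psi> \<alpha>)"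

text \<open>Single-qubit SIC vectors phi_1..phi_4 (a qubit vector is bool => complex,
False = |0>, True = |1>); the POVM elements are (1/2)|phi_j><phi_j|.\<close>
definition sic_povm :: "(nat \<Rightarrow> bool \<Rightarrow> complex) \<Rightarrow> bool" where
  "sic_povm \<phi> \<longleftrightarrow>
     (\<forall>j\<in>{1..4}. (\<Sum>b\<in>UNIV. (cmod (\<phi> j b))^2) = 1) \<and>
     (\<forall>j\<in>{1..4}. \<forall>k\<in>{1..4}. j \<noteq> k \<longrightarrow>
        (cmod (\<Sum>b\<in>UNIV. cnj (\<phi> j b) * \<phi> k b))^2 = 1/3)"

text \<open>P(q) = tr(rho (tensor_{i in S} |phi~_{q_i}><phi~_{q_i}|) (x) I), for q : S -> {1..4}.\<close>
definition sic_prob :: "nat \<Rightarrow> qstate \<Rightarrow> (nat \<Rightarrow> bool \<Rightarrow> complex) \<Rightarrow> nat set \<Rightarrow> (nat \<Rightarrow> nat) \<Rightarrow> real" where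
  "sic_prob n \<psi> \<phi> S q = (1 / 2 ^ card S) *
     (\<Sum>z\<in>Pow ({1..n} - S).
        (cmod (\<Sum>x\<in>Pow S. (\<Prod>i\<in>S. cnj (\<phi> (q i) (i \<in> x))) * \<psi> (x \<union> z)))^2)"

definition median :: "real list \<Rightarrow> real" where
  "median xs = (let ys = sort xs; m = length xs in
     if even m then (ys ! (m div 2 - 1) + ys ! (m div 2)) / 2 else ys ! (m div 2))"

definition num_blocks :: "real \<Rightarrow> nat" where
  "num_blocks \<delta> = nat \<lceil>8 * ln (1 / \<delta>)\<rceil>"

definition block_size :: "nat \<Rightarrow> real \<Rightarrow> nat" where
  "block_size s \<epsilon> = nat \<lceil>4 * 3 ^ s / \<epsilon>^2\<rceil>"

definition block_estimate :: "nat \<Rightarrow> nat \<Rightarrow> (nat \<Rightarrow> 'o) \<Rightarrow> nat \<Rightarrow> real" where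
  "block_estimate s B Qs b = 1 - 3 ^ s * (1 / real B) *
     real (card {i\<in>{(b-1)*B+1..b*B}. Qs (2*i-1) = Qs (2*i)})"

end

theory Submission
  imports Defs
begin

(* A SIC-POVM is a 2-design: averaged over the four outcomes, the second moment of a SIC
   projector on one qubit is (2/3)(identity + swap).  Taking the tensor product over the qubits
   of S and expanding chooses the set alpha of swapped qubits, and the swap test turns two
   copies of rho_S swapped on alpha into tr(rho_alpha^2).  Hence
   sum_q P(q)^2 = 6^(-s) sum_alpha tr(rho_alpha^2), i.e. C(S) = 1 - 3^s Pr[Q = Q'] for
   independent outcomes Q, Q'.  A block estimate is 1 - 3^s/B times the number of collisions
   among B disjoint pairs of outcomes, so it is unbiased with variance at most
   9^s Pr[Q = Q'] / B <= 3^s / B (as C(S) >= 0), and by Chebyshev it misses C(S) by epsilon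
   with probability at most 1/4.  Different blocks read disjoint outcomes and are independent;
   the median misses by epsilon only if at least half of the blocks do, which by Hoeffding has
   probability at most exp(-N_B/8) <= delta. *)

section \<open>SIC-POVMs are 2-designs\<close>

lemma sic_povm_normalized:
  assumes "sic_povm \<phi>" "j \<in> {1..4}"
  shows "(\<Sum>b\<in>UNIV. cnj (\<phi> j b) * \<phi> j b) = 1"
proof -
  have "(\<Sum>b\<in>UNIV. cnj (\<phi> j b) * \<phi> j b) = of_real (\<Sum>b\<in>UNIV. (cmod (\<phi> j b))^2)"
    unfolding of_real_sum complex_norm_square by (simp add: mult.commute)
  also have "\<dots> = 1" using assms unfolding sic_povm_def by simp
  finally show ?thesis .
qed

lemma sic_povm_overlap:
  assumes "sic_povm \<phi>" "j \<in> {1..4}" "k \<in> {1..4}" "j \<noteq> k"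
  shows "(\<Sum>b\<in>UNIV. cnj (\<phi> j b) * \<phi> k b) * (\<Sum>b\<in>UNIV. \<phi> j b * cnj (\<phi> k b)) = 1/3"
proof -
  have "(\<Sum>b\<in>UNIV. cnj (\<phi> j b) * \<phi> k b) * (\<Sum>b\<in>UNIV. \<phi> j b * cnj (\<phi> k b))
      = of_real ((cmod (\<Sum>b\<in>UNIV. cnj (\<phi> j b) * \<phi> k b))^2)"
    unfolding complex_norm_square cnj_sum complex_cnj_mult complex_cnj_cnj ..
  also have "(cmod (\<Sum>b\<in>UNIV. cnj (\<phi> j b) * \<phi> k b))^2 = 1/3"
    using assms unfolding sic_povm_def by blast
  finally show ?thesis by simp
qed

lemma sic_povm_frame_potential:
  assumes "sic_povm \<phi>"
  shows "(\<Sum>a\<in>UNIV. \<Sum>b\<in>UNIV. \<Sum>c\<in>UNIV. \<Sum>d\<in>UNIV.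
           (\<Sum>j\<in>{1..4::nat}. cnj (\<phi> j a) * \<phi> j b * cnj (\<phi> j c) * \<phi> j d) *
           (\<Sum>k\<in>{1..4::nat}. \<phi> k a * cnj (\<phi> k b) * \<phi> k c * cnj (\<phi> k d))) = 16/3"
proof -
  define ov where "ov j k = (\<Sum>b\<in>UNIV. cnj (\<phi> j b) * \<phi> k b) * (\<Sum>b\<in>UNIV. \<phi> j b * cnj (\<phi> k b))" for j k
  have "(\<Sum>a\<in>UNIV. \<Sum>b\<in>UNIV. \<Sum>c\<in>UNIV. \<Sum>d\<in>UNIV.
           (\<Sum>j\<in>{1..4::nat}. cnj (\<phi> j a) * \<phi> j b * cnj (\<phi> j c) * \<phi> j d) *
           (\<Sum>k\<in>{1..4::nat}. \<phi> k a * cnj (\<phi> k b) * \<phi> k c * cnj (\<phi> k d)))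
      = (\<Sum>j\<in>{1..4::nat}. \<Sum>k\<in>{1..4::nat}. ov j k * ov j k)"
    by (simp add: ov_def UNIV_bool sum_distrib_left sum_distrib_right sum.distrib algebra_simps)
  also have "\<dots> = (\<Sum>j\<in>{1..4::nat}. \<Sum>k\<in>{1..4::nat}. if j = k then 1 else 1/9)"
  proof (intro sum.cong refl)
    fix j k :: nat assume "j \<in> {1..4}" "k \<in> {1..4}"
    have "ov j j = (\<Sum>b\<in>UNIV. cnj (\<phi> j b) * \<phi> j b) * (\<Sum>b\<in>UNIV. cnj (\<phi> j b) * \<phi> j b)"
      by (simp add: ov_def mult.commute)
    then have "ov j k = (if j = k then 1 else 1/3)"
      using sic_povm_normalized[OF assms] sic_povm_overlap[OF assms] \<open>j \<in> {1..4}\<close> \<open>k \<in> {1..4}\<close>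
      by (auto simp: ov_def)
    then show "ov j k * ov j k = (if j = k then 1 else 1/9)" by simp
  qed
  also have "\<dots> = 16/3"
    by (simp add: numeral_eq_Suc atLeastAtMostSuc_conv)
  finally show ?thesis .
qed

lemma sic_povm_partial_traces:
  assumes "sic_povm \<phi>"
  shows "(\<Sum>a\<in>UNIV. \<Sum>c\<in>UNIV. \<Sum>j\<in>{1..4::nat}. cnj (\<phi> j a) * \<phi> j a * cnj (\<phi> j c) * \<phi> j c) = 4"
    and "(\<Sum>a\<in>UNIV. \<Sum>c\<in>UNIV. \<Sum>j\<in>{1..4::nat}. cnj (\<phi> j a) * \<phi> j c * cnj (\<phi> j c) * \<phi> j a) = 4"
proof -
  have norm_sq: "(\<Sum>a\<in>UNIV. \<Sum>c\<in>UNIV. (cnj (\<phi> j a) * \<phi> j a) * (cnj (\<phi> j c) * \<phi> j c)) = 1"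
    if "j \<in> {1..4}" for j
    using sic_povm_normalized[OF assms that] by (simp only: sum_product[symmetric]) simp
  have swap:
    "(\<Sum>a\<in>UNIV. \<Sum>c\<in>UNIV. \<Sum>j\<in>{1..4::nat}. cnj (\<phi> j a) * \<phi> j a * cnj (\<phi> j c) * \<phi> j c)
       = (\<Sum>j\<in>{1..4::nat}. \<Sum>a\<in>UNIV. \<Sum>c\<in>UNIV. (cnj (\<phi> j a) * \<phi> j a) * (cnj (\<phi> j c) * \<phi> j c))"
    "(\<Sum>a\<in>UNIV. \<Sum>c\<in>UNIV. \<Sum>j\<in>{1..4::nat}. cnj (\<phi> j a) * \<phi> j c * cnj (\<phi> j c) * \<phi> j a)
       = (\<Sum>j\<in>{1..4::nat}. \<Sum>a\<in>UNIV. \<Sum>c\<in>UNIV. (cnj (\<phi> j a) * \<phi> j a) * (cnj (\<phi> j c) * \<phi> j c))"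
    by (simp_all only: sum.swap[where A="UNIV::bool set" and B="{1..4::nat}"]) (simp_all add: mult_ac)
  have "(\<Sum>j\<in>{1..4::nat}. \<Sum>a\<in>UNIV. \<Sum>c\<in>UNIV. (cnj (\<phi> j a) * \<phi> j a) * (cnj (\<phi> j c) * \<phi> j c)) = 4"
    by (simp add: norm_sq)
  then show
    "(\<Sum>a\<in>UNIV. \<Sum>c\<in>UNIV. \<Sum>j\<in>{1..4::nat}. cnj (\<phi> j a) * \<phi> j a * cnj (\<phi> j c) * \<phi> j c) = 4"
    "(\<Sum>a\<in>UNIV. \<Sum>c\<in>UNIV. \<Sum>j\<in>{1..4::nat}. cnj (\<phi> j a) * \<phi> j c * cnj (\<phi> j c) * \<phi> j a) = 4"
    by (simp_all only: swap)
qed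

lemma sic_povm_two_design:
  assumes "sic_povm \<phi>"
  shows "(\<Sum>j\<in>{1..4::nat}. cnj (\<phi> j a) * \<phi> j b * cnj (\<phi> j c) * \<phi> j d)
       = 2/3 * (of_bool (a = b \<and> c = d) + of_bool (a = d \<and> c = b))"
proof -
  (* Frame potential: sum |T - E|^2 = sum |T|^2 - 2 Re (sum E T) + sum E^2 = 16/3 - 32/3 + 16/3. *)
  define T where "T a b c d = (\<Sum>j\<in>{1..4::nat}. cnj (\<phi> j a) * \<phi> j b * cnj (\<phi> j c) * \<phi> j d)"
    for a b c d
  define E :: "bool \<Rightarrow> bool \<Rightarrow> bool \<Rightarrow> bool \<Rightarrow> complex"
    where "E a b c d = 2/3 * (of_bool (a = b \<and> c = d) + of_bool (a = d \<and> c = b))" for a b c d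
  have TT: "(\<Sum>a\<in>UNIV. \<Sum>b\<in>UNIV. \<Sum>c\<in>UNIV. \<Sum>d\<in>UNIV. T a b c d * cnj (T a b c d)) = 16/3"
    using sic_povm_frame_potential[OF assms] unfolding T_def cnj_sum complex_cnj_mult complex_cnj_cnj .
  have ET: "(\<Sum>a\<in>UNIV. \<Sum>b\<in>UNIV. \<Sum>c\<in>UNIV. \<Sum>d\<in>UNIV. E a b c d * T a b c d) = 16/3"
  proof -
    have "(\<Sum>a\<in>UNIV. \<Sum>b\<in>UNIV. \<Sum>c\<in>UNIV. \<Sum>d\<in>UNIV. E a b c d * T a b c d)
        = 2/3 * ((\<Sum>a\<in>UNIV. \<Sum>c\<in>UNIV. T a a c c) + (\<Sum>a\<in>UNIV. \<Sum>c\<in>UNIV. T a c c a))"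
      by (simp add: E_def UNIV_bool algebra_simps)
    also have "\<dots> = 16/3"
      unfolding T_def sic_povm_partial_traces[OF assms] by simp
    finally show ?thesis .
  qed
  have EE: "(\<Sum>a\<in>UNIV. \<Sum>b\<in>UNIV. \<Sum>c\<in>UNIV. \<Sum>d\<in>UNIV. E a b c d * E a b c d) = 16/3"
    by (simp add: E_def UNIV_bool)
  have cnj_E: "cnj (E a b c d) = E a b c d" for a b c d
    by (cases a; cases b; cases c; cases d) (simp_all add: E_def)
  have expand: "of_real ((cmod (T a b c d - E a b c d))^2)
      = T a b c d * cnj (T a b c d) - E a b c d * T a b c d - cnj (E a b c d * T a b c d)
        + E a b c d * E a b c d" for a b c d
    unfolding complex_norm_square complex_cnj_mult complex_cnj_diff cnj_E by (simp add: algebra_simps)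
  have "(\<Sum>a\<in>UNIV. \<Sum>b\<in>UNIV. \<Sum>c\<in>UNIV. \<Sum>d\<in>UNIV. complex_of_real ((cmod (T a b c d - E a b c d))^2))
      = 0"
    unfolding expand sum.distrib sum_subtractf cnj_sum[symmetric] TT ET EE by simp
  then have "(\<Sum>a\<in>UNIV. \<Sum>b\<in>UNIV. \<Sum>c\<in>UNIV. \<Sum>d\<in>UNIV. (cmod (T a b c d - E a b c d))^2) = 0"
    unfolding of_real_sum[symmetric] of_real_eq_0_iff .
  then have "(cmod (T a b c d - E a b c d))^2 = 0"
    by (simp add: sum_nonneg_eq_0_iff sum_nonneg)
  then have "T a b c d = E a b c d"
    by simp
  then show ?thesis
    unfolding T_def E_def .
qed

section \<open>Collision probability of SIC outcomes and purities\<close>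

lemma prod_of_bool:
  "finite A \<Longrightarrow> (\<Prod>i\<in>A. of_bool (P i) :: 'a::comm_semiring_1) = of_bool (\<forall>i\<in>A. P i)"
  by (induction rule: finite_induct) auto

lemma sum_Pow_Un:
  assumes "A \<inter> B = {}"
  shows "(\<Sum>x\<in>Pow (A \<union> B). f x) = (\<Sum>u\<in>Pow A. \<Sum>t\<in>Pow B. f (u \<union> t))"
proof -
  have "bij_betw (\<lambda>(u, t). u \<union> t) (Pow A \<times> Pow B) (Pow (A \<union> B))"
    by (rule bij_betw_byWitness[where f' = "\<lambda>x. (x \<inter> A, x \<inter> B)"]) (use assms in auto)
  then have "(\<Sum>x\<in>Pow (A \<union> B). f x) = (\<Sum>(u, t)\<in>Pow A \<times> Pow B. f (u \<union> t))"
    by (simp add: sum.reindex_bij_betw[symmetric] case_prod_unfold)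
  then show ?thesis
    by (simp add: sum.cartesian_product)
qed

lemma sum_PiE_sic_moment:
  assumes "sic_povm \<phi>" "finite S" "x \<subseteq> S" "y \<subseteq> S" "x' \<subseteq> S" "y' \<subseteq> S"
  shows "(\<Sum>q\<in>Pi\<^sub>E S (\<lambda>_. {1..4::nat}). \<Prod>i\<in>S.
            cnj (\<phi> (q i) (i \<in> x)) * \<phi> (q i) (i \<in> y) * cnj (\<phi> (q i) (i \<in> x')) * \<phi> (q i) (i \<in> y'))
       = (2/3)^card S * (\<Sum>\<alpha>\<in>Pow S. of_bool (y = x' \<inter> \<alpha> \<union> (x - \<alpha>) \<and> y' = x \<inter> \<alpha> \<union> (x' - \<alpha>)))"
proof -
  define swap where "swap i \<longleftrightarrow> (i \<in> x \<longleftrightarrow> i \<in> y') \<and> (i \<in> x' \<longleftrightarrow> i \<in> y)" for i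
  define keep where "keep i \<longleftrightarrow> (i \<in> x \<longleftrightarrow> i \<in> y) \<and> (i \<in> x' \<longleftrightarrow> i \<in> y')" for i
  have "(\<Sum>q\<in>Pi\<^sub>E S (\<lambda>_. {1..4::nat}). \<Prod>i\<in>S.
            cnj (\<phi> (q i) (i \<in> x)) * \<phi> (q i) (i \<in> y) * cnj (\<phi> (q i) (i \<in> x')) * \<phi> (q i) (i \<in> y'))
      = (\<Prod>i\<in>S. \<Sum>j\<in>{1..4::nat}.
            cnj (\<phi> j (i \<in> x)) * \<phi> j (i \<in> y) * cnj (\<phi> j (i \<in> x')) * \<phi> j (i \<in> y'))"
    by (rule prod_sum_PiE[symmetric]) (use assms in auto)
  also have "\<dots> = (\<Prod>i\<in>S. 2/3 * (of_bool (swap i) + of_bool (keep i)))"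
    unfolding sic_povm_two_design[OF assms(1)] swap_def keep_def by (simp add: add.commute)
  also have "\<dots> = (2/3)^card S * (\<Sum>\<alpha>\<in>Pow S. (\<Prod>i\<in>\<alpha>. of_bool (swap i)) * (\<Prod>i\<in>S - \<alpha>. of_bool (keep i)))"
    by (simp only: prod.distrib prod_constant prod_add[OF assms(2)])
  also have "\<dots> = (2/3)^card S * (\<Sum>\<alpha>\<in>Pow S. of_bool (y = x' \<inter> \<alpha> \<union> (x - \<alpha>) \<and> y' = x \<inter> \<alpha> \<union> (x' - \<alpha>)))"
  proof -
    have "(\<Prod>i\<in>\<alpha>. of_bool (swap i)) * (\<Prod>i\<in>S - \<alpha>. of_bool (keep i))
        = (of_bool (y = x' \<inter> \<alpha> \<union> (x - \<alpha>) \<and> y' = x \<inter> \<alpha> \<union> (x' - \<alpha>)) :: complex)" if "\<alpha> \<subseteq> S" for \<alpha>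
    proof -
      have "((\<forall>i\<in>\<alpha>. swap i) \<and> (\<forall>i\<in>S - \<alpha>. keep i)) \<longleftrightarrow> y = x' \<inter> \<alpha> \<union> (x - \<alpha>) \<and> y' = x \<inter> \<alpha> \<union> (x' - \<alpha>)"
        using assms(3-6) that unfolding swap_def keep_def by blast
      moreover have "finite \<alpha>" "finite (S - \<alpha>)"
        using assms(2) that finite_subset by auto
      ultimately show ?thesis
        unfolding prod_of_bool[OF \<open>finite \<alpha>\<close>] prod_of_bool[OF \<open>finite (S - \<alpha>)\<close>] of_bool_conj[symmetric]
        by simp
    qed
    then show ?thesis by simp
  qed
  finally show ?thesis .
qed

lemma sic_prob_eq_reduced_state:
  "complex_of_real (sic_prob n \<psi> \<phi> S q) = 1 / 2^card S *
     (\<Sum>x\<in>Pow S. \<Sum>y\<in>Pow S. (\<Prod>i\<in>S. cnj (\<phi> (q i) (i \<in> x)) * \<phi> (q i) (i \<in> y)) * reduced_state n \<psi> S x y)"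
proof -
  define a where "a x = (\<Prod>i\<in>S. cnj (\<phi> (q i) (i \<in> x)))" for x
  have amplitude_sq: "(\<Sum>x\<in>Pow S. a x * \<psi> (x \<union> z)) * cnj (\<Sum>y\<in>Pow S. a y * \<psi> (y \<union> z))
      = (\<Sum>x\<in>Pow S. \<Sum>y\<in>Pow S. a x * cnj (a y) * (\<psi> (x \<union> z) * cnj (\<psi> (y \<union> z))))" for z
    by (simp add: cnj_sum sum_product mult_ac)
  have "complex_of_real (sic_prob n \<psi> \<phi> S q) = 1 / 2^card S *
      (\<Sum>z\<in>Pow ({1..n} - S). (\<Sum>x\<in>Pow S. a x * \<psi> (x \<union> z)) * cnj (\<Sum>y\<in>Pow S. a y * \<psi> (y \<union> z)))"
    unfolding sic_prob_def a_def of_real_mult of_real_sum complex_norm_square by simp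
  also have "\<dots> = 1 / 2^card S * (\<Sum>x\<in>Pow S. \<Sum>y\<in>Pow S. a x * cnj (a y) * reduced_state n \<psi> S x y)"
    unfolding amplitude_sq reduced_state_def sum_distrib_left
    by (simp only: sum.swap[where A = "Pow ({1..n} - S)"])
  finally show ?thesis
    by (simp add: a_def cnj_prod prod.distrib)
qed

lemma sum_of_bool_eq_pair:
  fixes F :: "'a \<Rightarrow> 'a \<Rightarrow> 'c::comm_semiring_1"
  assumes "finite A" "a \<in> A" "b \<in> A"
  shows "(\<Sum>y\<in>A. \<Sum>y'\<in>A. of_bool (y = a \<and> y' = b) * F y y') = F a b"
proof -
  have "(\<Sum>y'\<in>A. of_bool (y = a \<and> y' = b) * F y y') = (if y = a then F y b else 0)" for y
    using assms by (cases "y = a") simp_all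
  then show ?thesis
    using assms by simp
qed

lemma sum_of_bool_delta_contract:
  fixes F :: "'a \<Rightarrow> 'a \<Rightarrow> 'a \<Rightarrow> 'a \<Rightarrow> 'c::comm_semiring_1"
  assumes "finite A" "\<And>\<alpha> x x'. \<alpha> \<in> B \<Longrightarrow> x \<in> A \<Longrightarrow> x' \<in> A \<Longrightarrow> g \<alpha> x x' \<in> A \<and> h \<alpha> x x' \<in> A"
  shows "(\<Sum>x\<in>A. \<Sum>x'\<in>A. \<Sum>y\<in>A. \<Sum>y'\<in>A.
            (\<Sum>\<alpha>\<in>B. of_bool (y = g \<alpha> x x' \<and> y' = h \<alpha> x x')) * F x x' y y')
       = (\<Sum>\<alpha>\<in>B. \<Sum>x\<in>A. \<Sum>x'\<in>A. F x x' (g \<alpha> x x') (h \<alpha> x x'))"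
proof -
  have "(\<Sum>x\<in>A. \<Sum>x'\<in>A. \<Sum>y\<in>A. \<Sum>y'\<in>A.
            (\<Sum>\<alpha>\<in>B. of_bool (y = g \<alpha> x x' \<and> y' = h \<alpha> x x')) * F x x' y y')
      = (\<Sum>\<alpha>\<in>B. \<Sum>x\<in>A. \<Sum>x'\<in>A. \<Sum>y\<in>A. \<Sum>y'\<in>A. of_bool (y = g \<alpha> x x' \<and> y' = h \<alpha> x x') * F x x' y y')"
    by (simp only: sum_distrib_right sum.swap[where B = B])
  also have "\<dots> = (\<Sum>\<alpha>\<in>B. \<Sum>x\<in>A. \<Sum>x'\<in>A. F x x' (g \<alpha> x x') (h \<alpha> x x'))"
    by (intro sum.cong refl sum_of_bool_eq_pair) (use assms in auto)
  finally show ?thesis .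
qed

lemma reduced_state_partial_trace:
  assumes "\<alpha> \<subseteq> S" "S \<subseteq> {1..n}"
  shows "reduced_state n \<psi> \<alpha> u v = (\<Sum>t\<in>Pow (S - \<alpha>). reduced_state n \<psi> S (u \<union> t) (v \<union> t))"
proof -
  have "{1..n} - \<alpha> = (S - \<alpha>) \<union> ({1..n} - S)" "(S - \<alpha>) \<inter> ({1..n} - S) = {}"
    using assms by auto
  then show ?thesis
    unfolding reduced_state_def by (simp add: sum_Pow_Un Un_assoc)
qed

lemma sum_reduced_state_exchange:
  assumes "\<alpha> \<subseteq> S" "S \<subseteq> {1..n}"
  shows "(\<Sum>x\<in>Pow S. \<Sum>x'\<in>Pow S.
            reduced_state n \<psi> S x (x' \<inter> \<alpha> \<union> (x - \<alpha>)) * reduced_state n \<psi> S x' (x \<inter> \<alpha> \<union> (x' - \<alpha>)))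
       = (\<Sum>u\<in>Pow \<alpha>. \<Sum>v\<in>Pow \<alpha>. reduced_state n \<psi> \<alpha> u v * reduced_state n \<psi> \<alpha> v u)"
proof -
  have split: "(\<Sum>x\<in>Pow S. f x) = (\<Sum>u\<in>Pow \<alpha>. \<Sum>t\<in>Pow (S - \<alpha>). f (u \<union> t))" for f :: "nat set \<Rightarrow> complex"
    using sum_Pow_Un[of \<alpha> "S - \<alpha>" f] assms(1) by (simp add: Un_absorb1)
  have exchange: "(v \<union> t') \<inter> \<alpha> \<union> (u \<union> t - \<alpha>) = v \<union> t"
    if "u \<subseteq> \<alpha>" "v \<subseteq> \<alpha>" "t \<subseteq> S - \<alpha>" "t' \<subseteq> S - \<alpha>" for u v t t' :: "nat set"
    using that by auto
  have "(\<Sum>x\<in>Pow S. \<Sum>x'\<in>Pow S.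
            reduced_state n \<psi> S x (x' \<inter> \<alpha> \<union> (x - \<alpha>)) * reduced_state n \<psi> S x' (x \<inter> \<alpha> \<union> (x' - \<alpha>)))
      = (\<Sum>u\<in>Pow \<alpha>. \<Sum>t\<in>Pow (S - \<alpha>). \<Sum>v\<in>Pow \<alpha>. \<Sum>t'\<in>Pow (S - \<alpha>).
            reduced_state n \<psi> S (u \<union> t) (v \<union> t) * reduced_state n \<psi> S (v \<union> t') (u \<union> t'))"
    unfolding split by (intro sum.cong refl) (simp add: exchange)
  also have "\<dots> = (\<Sum>u\<in>Pow \<alpha>. \<Sum>v\<in>Pow \<alpha>.
            (\<Sum>t\<in>Pow (S - \<alpha>). reduced_state n \<psi> S (u \<union> t) (v \<union> t)) *
            (\<Sum>t'\<in>Pow (S - \<alpha>). reduced_state n \<psi> S (v \<union> t') (u \<union> t')))"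
    by (simp only: sum_product sum.swap[where A = "Pow (S - \<alpha>)" and B = "Pow \<alpha>"])
  also have "\<dots> = (\<Sum>u\<in>Pow \<alpha>. \<Sum>v\<in>Pow \<alpha>. reduced_state n \<psi> \<alpha> u v * reduced_state n \<psi> \<alpha> v u)"
    by (simp only: reduced_state_partial_trace[OF assms])
  finally show ?thesis .
qed

lemma double_sum_squared:
  "(\<Sum>x\<in>A. \<Sum>y\<in>A. f x y)^2
     = (\<Sum>x\<in>A. \<Sum>x'\<in>A. \<Sum>y\<in>A. \<Sum>y'\<in>A. f x y * f x' y' :: 'a::comm_semiring_1)"
  by (simp only: power2_eq_square sum_product)

lemma quarter_two_thirds_power: "(1 / 2^k)^2 * (2/3)^k = (1 / 6^k :: complex)"
proof -
  have "(6::complex)^k = 2^k * 3^k"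
    by (simp flip: power_mult_distrib)
  then show ?thesis
    by (simp add: power_divide power2_eq_square field_simps)
qed

lemma sum_sic_prob_squared:
  assumes "sic_povm \<phi>" "S \<subseteq> {1..n}"
  shows "complex_of_real (\<Sum>q\<in>Pi\<^sub>E S (\<lambda>_. {1..4::nat}). (sic_prob n \<psi> \<phi> S q)^2) = 1 / 6^card S *
           (\<Sum>\<alpha>\<in>Pow S. \<Sum>u\<in>Pow \<alpha>. \<Sum>v\<in>Pow \<alpha>. reduced_state n \<psi> \<alpha> u v * reduced_state n \<psi> \<alpha> v u)"
proof -
  define D where "D = Pi\<^sub>E S (\<lambda>_. {1..4::nat})"
  define \<rho> where "\<rho> = reduced_state n \<psi> S"
  define G where "G q x y = (\<Prod>i\<in>S. cnj (\<phi> (q i) (i \<in> x)) * \<phi> (q i) (i \<in> y))" for q :: "nat \<Rightarrow> nat" and x y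
  define g where "g \<alpha> x x' = x' \<inter> \<alpha> \<union> (x - \<alpha>)" for \<alpha> x x' :: "nat set"
  define h where "h \<alpha> x x' = x \<inter> \<alpha> \<union> (x' - \<alpha>)" for \<alpha> x x' :: "nat set"
  have fin: "finite S" using assms(2) finite_subset by blast
  have moment: "(\<Sum>q\<in>D. G q x y * G q x' y') = (2/3)^card S * (\<Sum>\<alpha>\<in>Pow S. of_bool (y = g \<alpha> x x' \<and> y' = h \<alpha> x x'))"
    if "x \<in> Pow S" "y \<in> Pow S" "x' \<in> Pow S" "y' \<in> Pow S" for x y x' y'
    using sum_PiE_sic_moment[OF assms(1) fin, of x y x' y'] that
    unfolding D_def G_def g_def h_def prod.distrib[symmetric] by (simp add: mult.assoc)
  have "complex_of_real (\<Sum>q\<in>D. (sic_prob n \<psi> \<phi> S q)^2)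
      = (\<Sum>q\<in>D. (1 / 2^card S * (\<Sum>x\<in>Pow S. \<Sum>y\<in>Pow S. G q x y * \<rho> x y))^2)"
    unfolding G_def \<rho>_def of_real_sum of_real_power sic_prob_eq_reduced_state ..
  also have "\<dots> = (\<Sum>q\<in>D. (1 / 2^card S)^2 * (\<Sum>x\<in>Pow S. \<Sum>x'\<in>Pow S. \<Sum>y\<in>Pow S. \<Sum>y'\<in>Pow S.
            G q x y * G q x' y' * (\<rho> x y * \<rho> x' y')))"
    unfolding power_mult_distrib double_sum_squared by (simp only: mult_ac)
  also have "\<dots> = (1 / 2^card S)^2 * (\<Sum>x\<in>Pow S. \<Sum>x'\<in>Pow S. \<Sum>y\<in>Pow S. \<Sum>y'\<in>Pow S.
            (\<Sum>q\<in>D. G q x y * G q x' y') * (\<rho> x y * \<rho> x' y'))"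
    by (simp only: sum_distrib_left sum_distrib_right sum.swap[where A = D])
  also have "\<dots> = (1 / 2^card S)^2 * (\<Sum>x\<in>Pow S. \<Sum>x'\<in>Pow S. \<Sum>y\<in>Pow S. \<Sum>y'\<in>Pow S.
            (\<Sum>\<alpha>\<in>Pow S. of_bool (y = g \<alpha> x x' \<and> y' = h \<alpha> x x')) * ((2/3)^card S * (\<rho> x y * \<rho> x' y')))"
    by (intro arg_cong[where f = "\<lambda>s. (1 / 2^card S)^2 * s"] sum.cong refl) (simp add: moment)
  also have "\<dots> = (1 / 2^card S)^2 * (\<Sum>\<alpha>\<in>Pow S. \<Sum>x\<in>Pow S. \<Sum>x'\<in>Pow S.
            (2/3)^card S * (\<rho> x (g \<alpha> x x') * \<rho> x' (h \<alpha> x x')))"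
    using fin by (subst sum_of_bool_delta_contract) (auto simp: g_def h_def)
  also have "\<dots> = 1 / 6^card S * (\<Sum>\<alpha>\<in>Pow S. \<Sum>x\<in>Pow S. \<Sum>x'\<in>Pow S. \<rho> x (g \<alpha> x x') * \<rho> x' (h \<alpha> x x'))"
    by (simp only: sum_distrib_left[symmetric]) (simp only: mult.assoc[symmetric] quarter_two_thirds_power)
  also have "\<dots> = 1 / 6^card S *
      (\<Sum>\<alpha>\<in>Pow S. \<Sum>u\<in>Pow \<alpha>. \<Sum>v\<in>Pow \<alpha>. reduced_state n \<psi> \<alpha> u v * reduced_state n \<psi> \<alpha> v u)"
    using assms(2) by (simp add: g_def h_def \<rho>_def sum_reduced_state_exchange)
  finally show ?thesis
    unfolding D_def .
qed

lemma cnj_reduced_state: "cnj (reduced_state n \<psi> \<alpha> u v) = reduced_state n \<psi> \<alpha> v u"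
  unfolding reduced_state_def cnj_sum by (simp add: mult.commute)

lemma sum_reduced_state_products:
  "(\<Sum>u\<in>Pow \<alpha>. \<Sum>v\<in>Pow \<alpha>. reduced_state n \<psi> \<alpha> u v * reduced_state n \<psi> \<alpha> v u)
     = of_real (\<Sum>u\<in>Pow \<alpha>. \<Sum>v\<in>Pow \<alpha>. (cmod (reduced_state n \<psi> \<alpha> u v))^2)"
  unfolding of_real_sum complex_norm_square cnj_reduced_state ..

lemma reduced_state_empty:
  assumes "pure_state n \<psi>"
  shows "reduced_state n \<psi> {} {} {} = 1"
proof -
  have "reduced_state n \<psi> {} {} {} = of_real (\<Sum>T\<in>Pow {1..n}. (cmod (\<psi> T))^2)"
    unfolding reduced_state_def of_real_sum complex_norm_square by simp
  moreover have "(\<Sum>T\<in>Pow {1..n}. (cmod (\<psi> T))^2) = 1"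
    using assms unfolding pure_state_def by blast
  ultimately show ?thesis
    by (metis of_real_1)
qed

lemma purity_eq_sum_reduced_state:
  assumes "pure_state n \<psi>"
  shows "complex_of_real (purity n \<psi> \<alpha>)
           = (\<Sum>u\<in>Pow \<alpha>. \<Sum>v\<in>Pow \<alpha>. reduced_state n \<psi> \<alpha> u v * reduced_state n \<psi> \<alpha> v u)"
proof (cases "\<alpha> = {}")
  case True
  then show ?thesis
    using reduced_state_empty[OF assms] by (simp add: purity_def)
next
  case False
  then show ?thesis
    unfolding sum_reduced_state_products by (simp add: purity_def sum_reduced_state_products)
qed

lemma norm_reduced_state_sq_le:
  "(cmod (reduced_state n \<psi> \<alpha> u v))^2
     \<le> (\<Sum>z\<in>Pow ({1..n} - \<alpha>). (cmod (\<psi> (u \<union> z)))^2) * (\<Sum>z\<in>Pow ({1..n} - \<alpha>). (cmod (\<psi> (v \<union> z)))^2)"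
proof -
  have "cmod (reduced_state n \<psi> \<alpha> u v) \<le> (\<Sum>z\<in>Pow ({1..n} - \<alpha>). cmod (\<psi> (u \<union> z)) * cmod (\<psi> (v \<union> z)))"
    unfolding reduced_state_def by (rule order_trans[OF norm_sum]) (simp add: norm_mult)
  then have "(cmod (reduced_state n \<psi> \<alpha> u v))^2
      \<le> (\<Sum>z\<in>Pow ({1..n} - \<alpha>). cmod (\<psi> (u \<union> z)) * cmod (\<psi> (v \<union> z)))^2"
    by (simp add: power_mono)
  also have "\<dots> \<le> (\<Sum>z\<in>Pow ({1..n} - \<alpha>). (cmod (\<psi> (u \<union> z)))^2) * (\<Sum>z\<in>Pow ({1..n} - \<alpha>). (cmod (\<psi> (v \<union> z)))^2)"
    by (rule Cauchy_Schwarz_ineq_sum)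
  finally show ?thesis .
qed

lemma purity_le_1:
  assumes "pure_state n \<psi>" "\<alpha> \<subseteq> {1..n}"
  shows "purity n \<psi> \<alpha> \<le> 1"
proof -
  define r where "r u = (\<Sum>z\<in>Pow ({1..n} - \<alpha>). (cmod (\<psi> (u \<union> z)))^2)" for u
  have "(\<Sum>u\<in>Pow \<alpha>. r u) = (\<Sum>T\<in>Pow {1..n}. (cmod (\<psi> T))^2)"
    using sum_Pow_Un[of \<alpha> "{1..n} - \<alpha>" "\<lambda>T. (cmod (\<psi> T))^2"] assms(2) by (simp add: r_def Un_absorb1)
  then have r_sum: "(\<Sum>u\<in>Pow \<alpha>. r u) = 1"
    using assms(1) unfolding pure_state_def by simp
  have "purity n \<psi> \<alpha> = (\<Sum>u\<in>Pow \<alpha>. \<Sum>v\<in>Pow \<alpha>. (cmod (reduced_state n \<psi> \<alpha> u v))^2)"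
    using purity_eq_sum_reduced_state[OF assms(1), of \<alpha>] unfolding sum_reduced_state_products of_real_eq_iff .
  also have "\<dots> \<le> (\<Sum>u\<in>Pow \<alpha>. \<Sum>v\<in>Pow \<alpha>. r u * r v)"
    unfolding r_def by (intro sum_mono norm_reduced_state_sq_le)
  also have "\<dots> = 1"
    using r_sum by (simp flip: sum_product)
  finally show ?thesis .
qed

lemma concentratable_entanglement_nonneg:
  assumes "pure_state n \<psi>" "S \<subseteq> {1..n}"
  shows "0 \<le> concentratable_entanglement n \<psi> S"
proof -
  have "finite S" using assms(2) finite_subset by blast
  have "(\<Sum>\<alpha>\<in>Pow S. purity n \<psi> \<alpha>) \<le> (\<Sum>\<alpha>\<in>Pow S. 1)"
    using assms by (intro sum_mono purity_le_1) auto
  also have "\<dots> = 2^card S"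
    using \<open>finite S\<close> by (simp add: card_Pow)
  finally show ?thesis
    by (simp add: concentratable_entanglement_def field_simps)
qed

lemma concentratable_entanglement_eq_collision:
  assumes "pure_state n \<psi>" "sic_povm \<phi>" "S \<subseteq> {1..n}"
  shows "concentratable_entanglement n \<psi> S
           = 1 - 3^card S * (\<Sum>q\<in>Pi\<^sub>E S (\<lambda>_. {1..4::nat}). (sic_prob n \<psi> \<phi> S q)^2)"
proof -
  have "complex_of_real (\<Sum>q\<in>Pi\<^sub>E S (\<lambda>_. {1..4::nat}). (sic_prob n \<psi> \<phi> S q)^2)
      = complex_of_real (1 / 6^card S * (\<Sum>\<alpha>\<in>Pow S. purity n \<psi> \<alpha>))"
    unfolding sum_sic_prob_squared[OF assms(2,3)] purity_eq_sum_reduced_state[OF assms(1), symmetric]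
    by simp
  then have "(\<Sum>q\<in>Pi\<^sub>E S (\<lambda>_. {1..4::nat}). (sic_prob n \<psi> \<phi> S q)^2) = 1 / 6^card S * (\<Sum>\<alpha>\<in>Pow S. purity n \<psi> \<alpha>)"
    by (simp only: of_real_eq_iff)
  moreover have "(6::real)^card S = 3^card S * 2^card S"
    by (simp flip: power_mult_distrib)
  ultimately show ?thesis
    by (simp add: concentratable_entanglement_def)
qed

section \<open>Collisions among i.i.d. discrete samples\<close>

locale iid_discrete = prob_space +
  fixes D :: "'b set" and X :: "'i \<Rightarrow> 'a \<Rightarrow> 'b" and I :: "'i set" and p :: "'b \<Rightarrow> real"
  assumes finite_values: "finite D"
    and indep: "indep_vars (\<lambda>_. count_space D) X I"
    and distr: "\<And>i x. i \<in> I \<Longrightarrow> x \<in> D \<Longrightarrow> prob {\<omega> \<in> space M. X i \<omega> = x} = p x"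
begin

definition collision_prob :: real where
  "collision_prob = (\<Sum>x\<in>D. (p x)^2)"

definition collision_event :: "'i \<Rightarrow> 'i \<Rightarrow> 'a set" where
  "collision_event i j = {\<omega> \<in> space M. X i \<omega> = X j \<omega>}"

lemma measurable_X: "i \<in> I \<Longrightarrow> X i \<in> measurable M (count_space D)"
  using indep unfolding indep_vars_def by auto

lemma X_in_values: "i \<in> I \<Longrightarrow> \<omega> \<in> space M \<Longrightarrow> X i \<omega> \<in> D"
  using measurable_space[OF measurable_X] by simp

lemma
  assumes "J \<subseteq> I" "J \<noteq> {}" "finite J" "\<And>k. k \<in> J \<Longrightarrow> f k \<in> D"
  shows events_all_eq: "{\<omega> \<in> space M. \<forall>k\<in>J. X k \<omega> = f k} \<in> events"
    and prob_all_eq: "prob {\<omega> \<in> space M. \<forall>k\<in>J. X k \<omega> = f k} = (\<Prod>k\<in>J. p (f k))"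
proof -
  have eq: "{\<omega> \<in> space M. \<forall>k\<in>J. X k \<omega> = f k} = (\<Inter>k\<in>J. X k -` {f k} \<inter> space M)"
    using assms(2) by auto
  have "X k -` {f k} \<inter> space M \<in> events" if "k \<in> J" for k
    using assms(1,4) that by (intro measurable_sets[OF measurable_X]) auto
  then show "{\<omega> \<in> space M. \<forall>k\<in>J. X k \<omega> = f k} \<in> events"
    unfolding eq using assms(2,3) by (intro sets.finite_INT) auto
  have "prob (\<Inter>k\<in>J. X k -` {f k} \<inter> space M) = (\<Prod>k\<in>J. prob (X k -` {f k} \<inter> space M))"
    using indep_varsD[OF indep assms(2,3,1)] assms(4) by simp
  also have "\<dots> = (\<Prod>k\<in>J. p (f k))"
  proof (intro prod.cong refl)
    fix k assume "k \<in> J"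
    have "X k -` {f k} \<inter> space M = {\<omega> \<in> space M. X k \<omega> = f k}"
      by auto
    then show "prob (X k -` {f k} \<inter> space M) = p (f k)"
      using distr assms(1,4) \<open>k \<in> J\<close> by auto
  qed
  finally show "prob {\<omega> \<in> space M. \<forall>k\<in>J. X k \<omega> = f k} = (\<Prod>k\<in>J. p (f k))"
    unfolding eq .
qed

lemma collision_event_eq:
  assumes "a \<in> I" "b \<in> I"
  shows "collision_event a b = (\<Union>x\<in>D. {\<omega> \<in> space M. \<forall>k\<in>{a, b}. X k \<omega> = x})"
  using X_in_values assms unfolding collision_event_def by auto

lemma events_collision:
  assumes "a \<in> I" "b \<in> I"
  shows "collision_event a b \<in> events"
  unfolding collision_event_eq[OF assms]
  using finite_values assms by (intro sets.finite_UN events_all_eq) auto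

lemma prob_collision:
  assumes "a \<in> I" "b \<in> I" "a \<noteq> b"
  shows "prob (collision_event a b) = collision_prob"
proof -
  have "prob (\<Union>x\<in>D. {\<omega> \<in> space M. \<forall>k\<in>{a, b}. X k \<omega> = x})
      = (\<Sum>x\<in>D. prob {\<omega> \<in> space M. \<forall>k\<in>{a, b}. X k \<omega> = x})"
  proof (rule finite_measure_finite_Union)
    show "(\<lambda>x. {\<omega> \<in> space M. \<forall>k\<in>{a, b}. X k \<omega> = x}) ` D \<subseteq> events"
      using assms by (intro image_subsetI events_all_eq) auto
  qed (use finite_values in \<open>auto simp: disjoint_family_on_def\<close>)
  also have "\<dots> = collision_prob"
    using assms unfolding collision_prob_def
    by (intro sum.cong refl, subst prob_all_eq) (auto simp: power2_eq_square)
  finally show ?thesis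
    unfolding collision_event_eq[OF assms(1,2)] .
qed

lemma prob_two_collisions:
  assumes "a \<in> I" "b \<in> I" "c \<in> I" "d \<in> I" "distinct [a, b, c, d]"
  shows "prob (collision_event a b \<inter> collision_event c d) = collision_prob^2"
proof -
  define F where "F xy = {\<omega> \<in> space M. \<forall>k\<in>{a, b, c, d}. X k \<omega> = (if k \<in> {a, b} then fst xy else snd xy)}"
    for xy
  have "collision_event a b \<inter> collision_event c d = (\<Union>xy\<in>D \<times> D. F xy)"
  proof (intro equalityI subsetI)
    fix \<omega> assume "\<omega> \<in> collision_event a b \<inter> collision_event c d"
    then have "\<omega> \<in> F (X a \<omega>, X c \<omega>)" "(X a \<omega>, X c \<omega>) \<in> D \<times> D"
      using assms X_in_values unfolding F_def collision_event_def by auto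
    then show "\<omega> \<in> (\<Union>xy\<in>D \<times> D. F xy)" by blast
  qed (use assms in \<open>auto simp: F_def collision_event_def\<close>)
  also have "prob \<dots> = (\<Sum>xy\<in>D \<times> D. prob (F xy))"
  proof (rule finite_measure_finite_Union)
    show "F ` (D \<times> D) \<subseteq> events"
      using assms unfolding F_def by (intro image_subsetI events_all_eq) auto
  qed (use finite_values assms in \<open>auto simp: disjoint_family_on_def F_def\<close>)
  also have "\<dots> = (\<Sum>xy\<in>D \<times> D. (p (fst xy))^2 * (p (snd xy))^2)"
    using assms unfolding F_def
    by (intro sum.cong refl, subst prob_all_eq) (auto simp: power2_eq_square)
  also have "\<dots> = collision_prob^2"
    unfolding collision_prob_def power2_eq_square[of "sum _ _"] sum_product sum.cartesian_product
    by (simp add: case_prod_unfold)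
  finally show ?thesis .
qed

context
  fixes J :: "'j set" and l r :: "'j \<Rightarrow> 'i"
  assumes finite_pairs: "finite J"
    and pairs_in_I: "\<And>k. k \<in> J \<Longrightarrow> l k \<in> I \<and> r k \<in> I \<and> l k \<noteq> r k"
    and pairs_disjoint: "\<And>k k'. k \<in> J \<Longrightarrow> k' \<in> J \<Longrightarrow> k \<noteq> k' \<Longrightarrow> {l k, r k} \<inter> {l k', r k'} = {}"
begin

lemma collision_count_eq_sum_indicator:
  "\<omega> \<in> space M \<Longrightarrow>
     real (card {k\<in>J. X (l k) \<omega> = X (r k) \<omega>}) = (\<Sum>k\<in>J. indicator (collision_event (l k) (r k)) \<omega>)"
  using finite_pairs by (simp add: indicator_def collision_event_def Int_def)

lemma events_pair_collision: "k \<in> J \<Longrightarrow> collision_event (l k) (r k) \<in> events"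
  using pairs_in_I by (intro events_collision) auto

lemma collision_count_squared:
  "(\<Sum>k\<in>J. indicator (collision_event (l k) (r k)) \<omega>)^2
     = (\<Sum>k\<in>J. \<Sum>k'\<in>J. indicator (collision_event (l k) (r k) \<inter> collision_event (l k') (r k')) \<omega> :: real)"
  unfolding power2_eq_square sum_product indicator_inter_arith ..

lemma integrable_collision_count:
  "integrable M (\<lambda>\<omega>. \<Sum>k\<in>J. indicator (collision_event (l k) (r k)) \<omega> :: real)"
  "integrable M (\<lambda>\<omega>. (\<Sum>k\<in>J. indicator (collision_event (l k) (r k)) \<omega>)^2 :: real)"
  unfolding collision_count_squared
  using events_pair_collision by (auto simp: less_top[symmetric])

lemma expectation_collision_count:
  "expectation (\<lambda>\<omega>. \<Sum>k\<in>J. indicator (collision_event (l k) (r k)) \<omega>) = card J * collision_prob"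
proof -
  have "expectation (\<lambda>\<omega>. \<Sum>k\<in>J. indicator (collision_event (l k) (r k)) \<omega>)
      = (\<Sum>k\<in>J. prob (collision_event (l k) (r k)))"
    using events_pair_collision
    by (subst Bochner_Integration.integral_sum) (auto simp: less_top[symmetric] Int_absorb2)
  also have "\<dots> = card J * collision_prob"
    using pairs_in_I by (simp add: prob_collision)
  finally show ?thesis .
qed

lemma expectation_collision_count_squared:
  "expectation (\<lambda>\<omega>. (\<Sum>k\<in>J. indicator (collision_event (l k) (r k)) \<omega>)^2)
     = card J * collision_prob + card J * (real (card J) - 1) * collision_prob^2"
proof -
  let ?A = "\<lambda>k. collision_event (l k) (r k)"
  have "expectation (\<lambda>\<omega>. (\<Sum>k\<in>J. indicator (?A k) \<omega>)^2) = (\<Sum>k\<in>J. \<Sum>k'\<in>J. prob (?A k \<inter> ?A k'))"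
    unfolding collision_count_squared using events_pair_collision
    by (simp add: Bochner_Integration.integral_sum less_top[symmetric] Int_absorb2 sets.Int)
  also have "\<dots> = (\<Sum>k\<in>J. collision_prob + (real (card J) - 1) * collision_prob^2)"
  proof (intro sum.cong refl)
    fix k assume "k \<in> J"
    have off_diagonal: "prob (?A k \<inter> ?A k') = collision_prob^2" if "k' \<in> J - {k}" for k'
      using pairs_in_I[of k] pairs_in_I[of k'] pairs_disjoint[of k k'] \<open>k \<in> J\<close> that
      by (intro prob_two_collisions) auto
    have diagonal: "prob (?A k \<inter> ?A k) = collision_prob"
      using pairs_in_I[OF \<open>k \<in> J\<close>] by (simp add: prob_collision)
    have "0 < card J"
      using \<open>k \<in> J\<close> finite_pairs card_gt_0_iff by blast
    then have "real (card (J - {k})) = real (card J) - 1"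
      using \<open>k \<in> J\<close> finite_pairs by (simp add: card_Diff_singleton of_nat_diff)
    with off_diagonal diagonal
    show "(\<Sum>k'\<in>J. prob (?A k \<inter> ?A k')) = collision_prob + (real (card J) - 1) * collision_prob^2"
      using \<open>k \<in> J\<close> finite_pairs by (simp add: sum.remove)
  qed
  also have "\<dots> = card J * collision_prob + card J * (real (card J) - 1) * collision_prob^2"
    by (simp add: algebra_simps)
  finally show ?thesis .
qed

lemma prob_collision_count_deviation:
  assumes "a > 0"
  shows "prob {\<omega> \<in> space M. a \<le> \<bar>real (card {k\<in>J. X (l k) \<omega> = X (r k) \<omega>}) - card J * collision_prob\<bar>}
           \<le> card J * collision_prob / a^2"
proof -
  define C where "C \<omega> = (\<Sum>k\<in>J. indicator (collision_event (l k) (r k)) \<omega> :: real)" for \<omega>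
  have "{\<omega> \<in> space M. a \<le> \<bar>real (card {k\<in>J. X (l k) \<omega> = X (r k) \<omega>}) - card J * collision_prob\<bar>}
      = {\<omega> \<in> space M. a \<le> \<bar>C \<omega> - expectation C\<bar>}"
    unfolding C_def expectation_collision_count by (auto simp: collision_count_eq_sum_indicator)
  also have "prob \<dots> \<le> variance C / a^2"
    using integrable_collision_count assms unfolding C_def by (intro Chebyshev_inequality) auto
  also have "variance C = card J * collision_prob - card J * collision_prob^2"
    unfolding C_def
    by (subst variance_eq[OF integrable_collision_count],
        simp only: expectation_collision_count expectation_collision_count_squared)
      (simp add: algebra_simps power2_eq_square)
  also have "\<dots> / a^2 \<le> card J * collision_prob / a^2"
    by (simp add: divide_right_mono)
  finally show ?thesis .
qed

end

end

section \<open>The median of independent estimates\<close>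

lemma median_bounds:
  assumes "xs \<noteq> []"
  shows "sort xs ! ((length xs - 1) div 2) \<le> median xs \<and> median xs \<le> sort xs ! (length xs div 2)"
proof -
  define m where "m = length xs"
  have "0 < m" using assms by (simp add: m_def)
  have sorted: "sort xs ! i \<le> sort xs ! j" if "i \<le> j" "j < m" for i j
    using that by (intro sorted_nth_mono) (auto simp: m_def)
  have "sort xs ! ((m - 1) div 2) \<le> median xs \<and> median xs \<le> sort xs ! (m div 2)"
  proof (cases "even m")
    case True
    then have "(m - 1) div 2 = m div 2 - 1" "m div 2 < m"
      using \<open>0 < m\<close> by (auto elim!: evenE)
    then show ?thesis
      using sorted[of "m div 2 - 1" "m div 2"] True unfolding median_def m_def[symmetric] Let_def by auto
  next
    case False
    then have "(m - 1) div 2 = m div 2"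
      by (auto elim!: oddE)
    then show ?thesis
      using False unfolding median_def m_def[symmetric] Let_def by auto
  qed
  then show ?thesis
    by (simp add: m_def)
qed

lemma card_le_length_filter:
  assumes "\<And>k. k \<in> K \<Longrightarrow> k < length ys \<and> P (ys ! k)"
  shows "card K \<le> length (filter P ys)"
proof -
  have "card K \<le> card {i. i < length ys \<and> P (ys ! i)}"
    using assms by (intro card_mono) auto
  then show ?thesis
    by (simp add: length_filter_conv_card)
qed

lemma median_far_imp_half_far:
  fixes xs :: "real list"
  assumes "xs \<noteq> []" "\<epsilon> \<le> \<bar>median xs - c\<bar>"
  shows "length xs \<le> 2 * length (filter (\<lambda>x. \<epsilon> \<le> \<bar>x - c\<bar>) xs)"
proof -
  define ys where "ys = sort xs"
  define m where "m = length xs"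
  have len: "length ys = m" and sorted: "\<And>i j. i \<le> j \<Longrightarrow> j < m \<Longrightarrow> ys ! i \<le> ys ! j"
    by (auto simp: ys_def m_def intro: sorted_nth_mono)
  have "0 < m" using assms(1) by (simp add: m_def)
  have "length (filter (\<lambda>x. \<epsilon> \<le> \<bar>x - c\<bar>) ys) = length (filter (\<lambda>x. \<epsilon> \<le> \<bar>x - c\<bar>) xs)"
    unfolding ys_def by (metis mset_filter mset_sort size_mset)
  moreover have "m \<le> 2 * length (filter (\<lambda>x. \<epsilon> \<le> \<bar>x - c\<bar>) ys)"
  proof (cases "c + \<epsilon> \<le> median xs")
    case True
    have "card {m div 2..<m} \<le> length (filter (\<lambda>x. \<epsilon> \<le> \<bar>x - c\<bar>) ys)"
    proof (rule card_le_length_filter)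
      fix k assume "k \<in> {m div 2..<m}"
      then show "k < length ys \<and> \<epsilon> \<le> \<bar>ys ! k - c\<bar>"
        using sorted[of "m div 2" k] median_bounds[OF assms(1)] True len
        unfolding ys_def m_def by auto
    qed
    then show ?thesis by simp
  next
    case False
    then have "median xs \<le> c - \<epsilon>" using assms(2) by auto
    have "(m - 1) div 2 < m"
      using \<open>0 < m\<close> div_le_dividend[of "m - 1" 2] by linarith
    have "card {0..(m - 1) div 2} \<le> length (filter (\<lambda>x. \<epsilon> \<le> \<bar>x - c\<bar>) ys)"
    proof (rule card_le_length_filter)
      fix k assume "k \<in> {0..(m - 1) div 2}"
      then show "k < length ys \<and> \<epsilon> \<le> \<bar>ys ! k - c\<bar>"
        using sorted[of k "(m - 1) div 2"] median_bounds[OF assms(1)] \<open>median xs \<le> c - \<epsilon>\<close>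
          \<open>(m - 1) div 2 < m\<close> len
        unfolding ys_def m_def by (auto simp: abs_if)
    qed
    then show ?thesis by simp
  qed
  ultimately show ?thesis
    by (simp add: m_def)
qed

lemma length_filter_map_upt: "length (filter P (map f [m..<n])) = card ({m..<n} \<inter> {i. P (f i)})"
proof -
  have "length (filter P (map f [m..<n])) = card ({i. P (f i)} \<inter> set [m..<n])"
    unfolding filter_map length_map comp_def by (rule distinct_length_filter) simp
  then show ?thesis
    by (simp add: Int_commute)
qed

lemma (in prob_space) expectation_of_bool:
  assumes "{\<omega> \<in> space M. P \<omega>} \<in> events"
  shows "expectation (\<lambda>\<omega>. of_bool (P \<omega>) :: real) = prob {\<omega> \<in> space M. P \<omega>}"
proof -
  have "expectation (\<lambda>\<omega>. of_bool (P \<omega>) :: real) = expectation (indicator {\<omega> \<in> space M. P \<omega>} :: 'a \<Rightarrow> real)"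
    by (intro Bochner_Integration.integral_cong) auto
  also have "\<dots> = prob {\<omega> \<in> space M. P \<omega>}"
    using assms by simp
  finally show ?thesis .
qed

lemma (in prob_space) prob_median_far:
  fixes Z :: "nat \<Rightarrow> 'a \<Rightarrow> real"
  assumes "1 \<le> N"
    and indep: "indep_vars (\<lambda>_. borel) Z {1..N}"
    and far: "\<And>b. b \<in> {1..N} \<Longrightarrow> prob {\<omega> \<in> space M. \<epsilon> \<le> \<bar>Z b \<omega> - c\<bar>} \<le> 1/4"
  shows "prob {\<omega> \<in> space M. \<epsilon> \<le> \<bar>median (map (\<lambda>b. Z b \<omega>) [1..<N + 1]) - c\<bar>} \<le> exp (- real N / 8)"
proof -
  define W where "W b \<omega> = (of_bool (\<epsilon> \<le> \<bar>Z b \<omega> - c\<bar>) :: real)" for b \<omega>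
  define \<mu> where "\<mu> = (\<Sum>b\<in>{1..N}. expectation (W b))"
  interpret H: Hoeffding_ineq M "{1..N}" W "\<lambda>_. 0" "\<lambda>_. 1" \<mu>
  proof unfold_locales
    show "indep_vars (\<lambda>_. borel) W {1..N}"
      unfolding W_def by (rule indep_vars_compose2[OF indep]) measurable
  qed (auto simp: W_def \<mu>_def)
  have "expectation (W b) = prob {\<omega> \<in> space M. \<epsilon> \<le> \<bar>Z b \<omega> - c\<bar>}" if "b \<in> {1..N}" for b
  proof -
    have [measurable]: "Z b \<in> borel_measurable M"
      using indep that unfolding indep_vars_def by auto
    show ?thesis
      unfolding W_def by (rule expectation_of_bool) measurable
  qed
  then have "\<mu> \<le> real N / 4"
    unfolding \<mu>_def using sum_mono[of "{1..N}" _ "\<lambda>_. 1/4", OF far] by simp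
  have "{\<omega> \<in> space M. \<epsilon> \<le> \<bar>median (map (\<lambda>b. Z b \<omega>) [1..<N + 1]) - c\<bar>}
      \<subseteq> {\<omega> \<in> space M. \<mu> + real N / 4 \<le> (\<Sum>b\<in>{1..N}. W b \<omega>)}"
  proof safe
    fix \<omega> assume "\<omega> \<in> space M" "\<epsilon> \<le> \<bar>median (map (\<lambda>b. Z b \<omega>) [1..<N + 1]) - c\<bar>"
    then have "N \<le> 2 * length (filter (\<lambda>x. \<epsilon> \<le> \<bar>x - c\<bar>) (map (\<lambda>b. Z b \<omega>) [1..<N + 1]))"
      using median_far_imp_half_far[of "map (\<lambda>b. Z b \<omega>) [1..<N + 1]"] \<open>1 \<le> N\<close> by simp
    also have "\<dots> = 2 * card ({1..<N + 1} \<inter> {b. \<epsilon> \<le> \<bar>Z b \<omega> - c\<bar>})"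
      unfolding length_filter_map_upt ..
    finally show "\<mu> + real N / 4 \<le> (\<Sum>b\<in>{1..N}. W b \<omega>)"
      using \<open>\<mu> \<le> real N / 4\<close> by (simp add: W_def atLeastLessThanSuc_atLeastAtMost)
  qed
  then have "prob {\<omega> \<in> space M. \<epsilon> \<le> \<bar>median (map (\<lambda>b. Z b \<omega>) [1..<N + 1]) - c\<bar>}
      \<le> prob {\<omega> \<in> space M. \<mu> + real N / 4 \<le> (\<Sum>b\<in>{1..N}. W b \<omega>)}"
    by (intro finite_measure_mono) measurable
  also have "\<dots> \<le> exp (-2 * (real N / 4)^2 / (\<Sum>b\<in>{1..N}. (1 - 0)^2))"
    using \<open>1 \<le> N\<close> by (intro H.Hoeffding_ineq_ge) auto
  also have "\<dots> = exp (- real N / 8)"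
    using \<open>1 \<le> N\<close> by (simp add: power2_eq_square field_simps)
  finally show ?thesis .
qed

section \<open>Block estimates\<close>

lemma disjoint_family_blocks: "disjoint_family (\<lambda>b::nat. {(b - 1) * m + 1..b * m})"
proof -
  have "{(b - 1) * m + 1..b * m} \<inter> {(c - 1) * m + 1..c * m} = {}" if "b < c" for b c
  proof -
    have "b * m \<le> (c - 1) * m"
      using that by (intro mult_le_mono1) linarith
    then have False if "x \<le> b * m" "(c - 1) * m + 1 \<le> x" for x
      using that by linarith
    then show ?thesis by fastforce
  qed
  then show ?thesis
    unfolding disjoint_family_on_def by (metis Int_commute linorder_neqE_nat)
qed

lemma pair_in_double_block:
  fixes i b B :: nat
  assumes "i \<in> {(b - 1) * B + 1..b * B}"
  shows "2 * i - 1 \<in> {(b - 1) * (2 * B) + 1..b * (2 * B)} \<and> 2 * i \<in> {(b - 1) * (2 * B) + 1..b * (2 * B)}"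
proof (cases b)
  case (Suc c)
  have "Suc c * B = c * B + B" "c * (2 * B) = 2 * (c * B)" "Suc c * (2 * B) = 2 * (c * B) + 2 * B"
    by simp_all
  then show ?thesis
    using assms Suc by auto
qed (use assms in simp)

lemma block_estimate_restrict:
  assumes "{(b - 1) * (2 * B) + 1..b * (2 * B)} \<subseteq> K"
  shows "block_estimate s B (restrict Qs K) b = block_estimate s B Qs b"
proof -
  have "2 * i - 1 \<in> K \<and> 2 * i \<in> K" if "i \<in> {(b - 1) * B + 1..b * B}" for i
    using pair_in_double_block[OF that] assms by blast
  then show ?thesis
    unfolding block_estimate_def by (metis (mono_tags, lifting) Collect_cong restrict_apply')
qed

lemma double_block_subset:
  fixes b N B :: nat
  shows "b \<in> {1..N} \<Longrightarrow> {(b - 1) * (2 * B) + 1..b * (2 * B)} \<subseteq> {1..2 * N * B}"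
  using mult_le_mono1[of b N "2 * B"] by (auto simp: mult.assoc)

lemma block_pair_in_range:
  fixes k b N B :: nat
  assumes "k \<in> {(b - 1) * B + 1..b * B}" "b \<in> {1..N}"
  shows "2 * k - 1 \<in> {1..2 * N * B} \<and> 2 * k \<in> {1..2 * N * B} \<and> 2 * k - 1 \<noteq> 2 * k"
proof -
  have "2 * k - 1 \<noteq> 2 * k"
    using assms(1) by (simp, linarith)
  then show ?thesis
    using pair_in_double_block[OF assms(1)] double_block_subset[OF assms(2), of B] by blast
qed

lemma block_estimate_far_iff:
  assumes "0 < B"
  shows "\<epsilon> \<le> \<bar>block_estimate s B Qs b - (1 - 3^s * c)\<bar> \<longleftrightarrow>
           \<epsilon> * B / 3^s \<le> \<bar>real (card {i \<in> {(b - 1) * B + 1..b * B}. Qs (2 * i - 1) = Qs (2 * i)}) - B * c\<bar>"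
proof -
  have "1 - 3^s * (1 / B) * C - (1 - 3^s * c) = - (3^s / B) * (C - B * c)" for C :: real
    using assms by (simp add: field_simps)
  then have "\<bar>1 - 3^s * (1 / B) * C - (1 - 3^s * c)\<bar> = 3^s / B * \<bar>C - B * c\<bar>" for C :: real
    by (simp add: abs_mult)
  then have "\<epsilon> \<le> \<bar>1 - 3^s * (1 / B) * C - (1 - 3^s * c)\<bar> \<longleftrightarrow> \<epsilon> * B / 3^s \<le> \<bar>C - B * c\<bar>" for C :: real
    using assms by (simp add: field_simps)
  then show ?thesis
    unfolding block_estimate_def .
qed

lemma (in prob_space) indep_vars_block_estimates:
  assumes "indep_vars (\<lambda>_. count_space D) X {1..2 * N * B}" "finite D"
  shows "indep_vars (\<lambda>_. borel) (\<lambda>b \<omega>. block_estimate s B (\<lambda>i. X i \<omega>) b) {1..N}"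
proof -
  define K where "K b = {(b - 1) * (2 * B) + 1..b * (2 * B)}" for b
  have "K b \<subseteq> {1..2 * N * B}" if "b \<in> {1..N}" for b
    unfolding K_def using that by (rule double_block_subset)
  then have "indep_vars (\<lambda>b. PiM (K b) (\<lambda>_. count_space D)) (\<lambda>b \<omega>. restrict (\<lambda>i. X i \<omega>) (K b)) {1..N}"
    using disjoint_family_blocks[of "2 * B"] unfolding K_def[abs_def]
    by (intro indep_vars_restrict[OF assms(1)]) (auto simp: disjoint_family_on_def)
  then have "indep_vars (\<lambda>_. borel) (\<lambda>b \<omega>. block_estimate s B (restrict (\<lambda>i. X i \<omega>) (K b)) b) {1..N}"
    by (rule indep_vars_compose2[where Y = "\<lambda>b r. block_estimate s B r b"])
      (use assms(2) in \<open>simp add: count_space_PiM_finite K_def countable_finite measurable_count_space_eq1\<close>)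
  then show ?thesis
    by (simp add: K_def block_estimate_restrict)
qed

lemma prob_block_estimate_far:
  fixes X :: "nat \<Rightarrow> 'a \<Rightarrow> 'b"
  assumes iid: "iid_discrete M D X {1..2 * N * B} p"
    and "b \<in> {1..N}" "0 < B" "0 < \<epsilon>" "3^s * (\<Sum>x\<in>D. (p x)^2) \<le> 1"
  shows "measure M {\<omega> \<in> space M. \<epsilon> \<le> \<bar>block_estimate s B (\<lambda>i. X i \<omega>) b - (1 - 3^s * (\<Sum>x\<in>D. (p x)^2))\<bar>}
           \<le> 3^s / (\<epsilon>^2 * B)"
proof -
  interpret iid_discrete M D X "{1..2 * N * B}" p by (rule iid)
  define J where "J = {(b - 1) * B + 1..b * B}"
  define a where "a = \<epsilon> * B / 3^s"
  have "card J = B" using assms(2) by (simp add: J_def algebra_simps)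
  have "a > 0" using assms(3,4) by (simp add: a_def)
  have "prob {\<omega> \<in> space M. a \<le> \<bar>real (card {k\<in>J. X (2 * k - 1) \<omega> = X (2 * k) \<omega>}) - card J * collision_prob\<bar>}
      \<le> card J * collision_prob / a^2"
    using block_pair_in_range[OF _ assms(2)] unfolding J_def
    by (intro prob_collision_count_deviation \<open>a > 0\<close>) auto
  moreover have "{\<omega> \<in> space M. \<epsilon> \<le> \<bar>block_estimate s B (\<lambda>i. X i \<omega>) b - (1 - 3^s * (\<Sum>x\<in>D. (p x)^2))\<bar>}
      = {\<omega> \<in> space M. a \<le> \<bar>real (card {k\<in>J. X (2 * k - 1) \<omega> = X (2 * k) \<omega>}) - B * collision_prob\<bar>}"
    unfolding block_estimate_far_iff[OF assms(3)] collision_prob_def a_def J_def ..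
  moreover have "B * collision_prob / a^2 = 3^s * (3^s * collision_prob) / (\<epsilon>^2 * B)"
    using assms(3,4) by (simp add: a_def power2_eq_square field_simps)
  moreover have "3^s * (3^s * collision_prob) / (\<epsilon>^2 * B) \<le> 3^s / (\<epsilon>^2 * B)"
    using assms(3-5) unfolding collision_prob_def by (intro divide_right_mono) auto
  ultimately show ?thesis
    using \<open>card J = B\<close> by simp
qed

lemma num_blocks_pos:
  assumes "0 < \<delta>" "\<delta> < 1"
  shows "1 \<le> num_blocks \<delta>"
proof -
  have "0 < ln (1 / \<delta>)"
    using assms by simp
  then show ?thesis
    unfolding num_blocks_def by linarith
qed

lemma exp_num_blocks_le: "0 < \<delta> \<Longrightarrow> exp (- real (num_blocks \<delta>) / 8) \<le> \<delta>"
proof -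
  assume "0 < \<delta>"
  have "8 * ln (1 / \<delta>) \<le> real (num_blocks \<delta>)"
    unfolding num_blocks_def by (rule real_nat_ceiling_ge)
  then have "- real (num_blocks \<delta>) / 8 \<le> ln \<delta>"
    using \<open>0 < \<delta>\<close> by (simp add: ln_div)
  then show ?thesis
    using \<open>0 < \<delta>\<close> by (metis exp_le_cancel_iff exp_ln)
qed

lemma block_size_bound:
  assumes "0 < \<epsilon>"
  shows "0 < block_size s \<epsilon>" "3^s / (\<epsilon>^2 * block_size s \<epsilon>) \<le> 1/4"
proof -
  have ge: "4 * 3^s / \<epsilon>^2 \<le> real (block_size s \<epsilon>)"
    unfolding block_size_def by (rule real_nat_ceiling_ge)
  moreover have "0 < 4 * 3^s / \<epsilon>^2"
    using assms by simp
  ultimately show "0 < block_size s \<epsilon>"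
    by linarith
  with ge show "3^s / (\<epsilon>^2 * block_size s \<epsilon>) \<le> 1/4"
    using assms by (simp add: field_simps)
qed

theorem theorem4:
  fixes n :: nat and \<psi> :: qstate and S :: "nat set"
    and \<phi> :: "nat \<Rightarrow> bool \<Rightarrow> complex"
    and \<epsilon> \<delta> :: real
    and \<Omega> :: "'a measure" and Q :: "nat \<Rightarrow> 'a \<Rightarrow> (nat \<Rightarrow> nat)"
  assumes "pure_state n \<psi>"
    and "S \<subseteq> {1..n}" and "S \<noteq> {}"
    and "\<epsilon> > 0" and "0 < \<delta>" and "\<delta> < 1"
    and "sic_povm \<phi>"
    and "prob_space \<Omega>"
    and "prob_space.indep_vars \<Omega> (\<lambda>_. count_space (Pi\<^sub>E S (\<lambda>_. {1..4::nat}))) Q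
           {1..2 * num_blocks \<delta> * block_size (card S) \<epsilon>}"
    and "\<forall>i\<in>{1..2 * num_blocks \<delta> * block_size (card S) \<epsilon>}. \<forall>q\<in>Pi\<^sub>E S (\<lambda>_. {1..4::nat}).
           measure \<Omega> {\<omega>\<in>space \<Omega>. Q i \<omega> = q} = sic_prob n \<psi> \<phi> S q"
  shows "measure \<Omega> {\<omega>\<in>space \<Omega>.
           \<bar>median (map (\<lambda>b. block_estimate (card S) (block_size (card S) \<epsilon>) (\<lambda>i. Q i \<omega>) b)
                        [1..<num_blocks \<delta> + 1])
            - concentratable_entanglement n \<psi> S\<bar> \<ge> \<epsilon>} \<le> \<delta>"
proof -
  interpret prob_space \<Omega> by (rule assms(8))
  have "finite (Pi\<^sub>E S (\<lambda>_. {1..4::nat}))"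
    using assms(2) finite_subset by (blast intro: finite_PiE)
  then have iid: "iid_discrete \<Omega> (Pi\<^sub>E S (\<lambda>_. {1..4})) Q {1..2 * num_blocks \<delta> * block_size (card S) \<epsilon>}
      (sic_prob n \<psi> \<phi> S)"
    using assms(8-10) by (simp add: iid_discrete_def iid_discrete_axioms_def)
  have CE: "concentratable_entanglement n \<psi> S
      = 1 - 3^card S * (\<Sum>q\<in>Pi\<^sub>E S (\<lambda>_. {1..4}). (sic_prob n \<psi> \<phi> S q)^2)"
    by (rule concentratable_entanglement_eq_collision[OF assms(1,7,2)])
  then have collision_bound: "3^card S * (\<Sum>q\<in>Pi\<^sub>E S (\<lambda>_. {1..4}). (sic_prob n \<psi> \<phi> S q)^2) \<le> 1"
    using concentratable_entanglement_nonneg[OF assms(1,2)] by linarith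
  have "prob {\<omega> \<in> space \<Omega>. \<epsilon> \<le> \<bar>block_estimate (card S) (block_size (card S) \<epsilon>) (\<lambda>i. Q i \<omega>) b
                - concentratable_entanglement n \<psi> S\<bar>} \<le> 1/4" if "b \<in> {1..num_blocks \<delta>}" for b
    using prob_block_estimate_far[OF iid that block_size_bound(1)[OF assms(4)] assms(4) collision_bound]
      block_size_bound(2)[OF assms(4), of "card S"] unfolding CE by linarith
  then have "prob {\<omega> \<in> space \<Omega>. \<epsilon> \<le> \<bar>median (map (\<lambda>b. block_estimate (card S) (block_size (card S) \<epsilon>)
                (\<lambda>i. Q i \<omega>) b) [1..<num_blocks \<delta> + 1]) - concentratable_entanglement n \<psi> S\<bar>}
      \<le> exp (- real (num_blocks \<delta>) / 8)"
    using \<open>finite (Pi\<^sub>E S (\<lambda>_. {1..4::nat}))\<close>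
    by (intro prob_median_far num_blocks_pos[OF assms(5,6)] indep_vars_block_estimates[OF assms(9)])
  also have "\<dots> \<le> \<delta>"
    by (rule exp_num_blocks_le[OF assms(5)])
  finally show ?thesis .
qed

end
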